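(* Fix integers $k \ge 1$ and $n \ge 1$. For every database $D$ of $n$ rows and every neighboring database $D'$ (as defined in the context), $|\mathrm{SSE}(D) - \mathrm{SSE}(D')| \le 7$. That is, the sensitivity of $\mathrm{SSE}$ is at most $7$.
   Context: A database $D$ consists of $n$ rows. Each row is a pair $(g, y)$ with group label $g \in \{1,\dots,k\}$ and response value $y \in [0,1]$; the number of groups $k$ is fixed. For group $i$ let $n_i$ be the number of rows with label $i$, so $\sum_i n_i = n$. Let $y_{i1},\dots,y_{in_i}$ be the responses in group $i$ and $\overline{y}_i = \frac{1}{n_i}\sum_j y_{ij}$ be the group mean; an empty group contributes nothing to any sum. Define $\mathrm{SSE}(D) = \sum_{i=1}^k \sum_{j=1}^{n_i} (y_{ij} - \overline{y}_i)^2$. Two databases $D, D'$ with $n$ rows each are neighboring if they differ in exactly one row; the changed row may have a different group label and/or a different response value. The sensitivity of a real-valued function $f$ on databases is $\max |f(D) - f(D')|$, taken over all neighboring pairs $D, D'$. *)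

theory Defs
  imports Complex_Main
begin

text \<open>A row is a pair (g, y) of a group label and a response value.
  A database is a list of rows (its length is the number of rows).\<close>

type_synonym row = "nat \<times> real"
type_synonym database = "row list"

definition valid_db :: "nat \<Rightarrow> nat \<Rightarrow> database \<Rightarrow> bool" where
  "valid_db k n D \<longleftrightarrow> length D = n \<and>
     (\<forall>r \<in> set D. fst r \<in> {1..k} \<and> 0 \<le> snd r \<and> snd r \<le> 1)"

definition group_vals :: "database \<Rightarrow> nat \<Rightarrow> real list" where
  "group_vals D i = map snd (filter (\<lambda>r. fst r = i) D)"

definition group_mean :: "database \<Rightarrow> nat \<Rightarrow> real" where
  "group_mean D i = sum_list (group_vals D i) / real (length (group_vals D i))"

definition SSE :: "nat \<Rightarrow> database \<Rightarrow> real" where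
  "SSE k D = (\<Sum>i = 1..k. \<Sum>y \<leftarrow> group_vals D i. (y - group_mean D i)^2)"

definition neighboring :: "database \<Rightarrow> database \<Rightarrow> bool" where
  "neighboring D D' \<longleftrightarrow> length D = length D' \<and>
     card {j. j < length D \<and> D ! j \<noteq> D' ! j} = 1"

end

theory Submission
  imports Defs
begin

text \<open>Changing one row touches at most two groups (the old and the new label of that row), and
  in each touched group it amounts to deleting and/or inserting one value of \<open>[0,1]\<close>.
  Inserting a value never decreases the sum of squared deviations, and by the parallel-axis
  identity it increases it by at most the squared distance of the new value to the old mean,
  which is at most 1. Hence SSE changes by at most 2.\<close>

definition list_mean :: "real list \<Rightarrow> real" where
  "list_mean L = sum_list L / real (length L)"

definition sq_dev :: "real list \<Rightarrow> real" where
  "sq_dev L = (\<Sum>y\<leftarrow>L. (y - list_mean L)^2)"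

lemma sum_list_sq_diff_expand:
  "(\<Sum>y\<leftarrow>L. (y - c)^2) = (\<Sum>y\<leftarrow>L. y^2) - 2 * c * sum_list L + real (length L) * c^2"
  for c :: real
  by (induction L) (auto simp: algebra_simps power2_eq_square)

lemma sum_list_sq_diff_eq_sq_dev:
  "(\<Sum>y\<leftarrow>L. (y - c)^2) = sq_dev L + real (length L) * (list_mean L - c)^2"
  for c :: real
proof (cases "L = []")
  case True
  then show ?thesis by (simp add: sq_dev_def)
next
  case False
  then have "sum_list L = real (length L) * list_mean L"
    by (simp add: list_mean_def)
  then show ?thesis
    unfolding sq_dev_def sum_list_sq_diff_expand[where L=L and c=c] sum_list_sq_diff_expand[where L=L and c="list_mean L"]
    by (simp add: algebra_simps power2_eq_square)
qed

lemma sq_dev_le_sum_list_sq_diff: "sq_dev L \<le> (\<Sum>y\<leftarrow>L. (y - c)^2)"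
  using sum_list_sq_diff_eq_sq_dev[where L=L and c=c] by simp

lemma list_mean_in_unit_interval:
  assumes "set L \<subseteq> {0..1}"
  shows "list_mean L \<in> {0..1}"
proof -
  have "0 \<le> sum_list L \<and> sum_list L \<le> real (length L)"
    using assms by (induction L) auto
  then show ?thesis
    by (cases "L = []") (auto simp: list_mean_def divide_le_eq_1)
qed

lemma sq_dev_insert_ge: "sq_dev (A @ B) \<le> sq_dev (A @ x # B)"
proof -
  let ?m = "list_mean (A @ x # B)"
  have "sq_dev (A @ B) \<le> (\<Sum>y\<leftarrow>A @ B. (y - ?m)^2)"
    by (rule sq_dev_le_sum_list_sq_diff)
  also have "\<dots> \<le> (\<Sum>y\<leftarrow>A @ B. (y - ?m)^2) + (x - ?m)^2"
    by simp
  also have "\<dots> = sq_dev (A @ x # B)"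
    by (simp add: sq_dev_def)
  finally show ?thesis .
qed

lemma sq_dev_insert_le: "sq_dev (A @ x # B) \<le> sq_dev (A @ B) + (x - list_mean (A @ B))^2"
proof -
  let ?m = "list_mean (A @ B)"
  have "sq_dev (A @ x # B) \<le> (\<Sum>y\<leftarrow>A @ x # B. (y - ?m)^2)"
    by (rule sq_dev_le_sum_list_sq_diff)
  also have "\<dots> = sq_dev (A @ B) + (x - ?m)^2"
    by (simp add: sq_dev_def)
  finally show ?thesis .
qed

lemma sq_dev_insert_unit_interval:
  assumes "set (A @ B) \<subseteq> {0..1}" and "x \<in> {0..1}"
  shows "sq_dev (A @ x # B) \<le> sq_dev (A @ B) + 1"
proof -
  have "\<bar>x - list_mean (A @ B)\<bar> \<le> 1"
    using list_mean_in_unit_interval[OF assms(1)] assms(2) by auto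
  then have "(x - list_mean (A @ B))^2 \<le> 1"
    using abs_le_square_iff[of "x - list_mean (A @ B)" 1] by simp
  with sq_dev_insert_le[of A x B] show ?thesis by linarith
qed

lemma sq_dev_replace_optional_unit_interval:
  assumes "set (A @ B) \<subseteq> {0..1}" and "x \<in> {0..1}" and "x' \<in> {0..1}"
  shows "\<bar>sq_dev (A @ (if b then [x] else []) @ B) - sq_dev (A @ (if b' then [x'] else []) @ B)\<bar>
           \<le> of_bool b + of_bool b'"
  using sq_dev_insert_ge[of A B x] sq_dev_insert_ge[of A B x']
    sq_dev_insert_unit_interval[OF assms(1,2)] sq_dev_insert_unit_interval[OF assms(1,3)]
  by auto

lemma SSE_eq_sum_sq_dev: "SSE k D = (\<Sum>i = 1..k. sq_dev (group_vals D i))"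
  by (simp add: SSE_def sq_dev_def group_mean_def list_mean_def)

lemma group_vals_append_Cons:
  "group_vals (P @ r # Q) i = group_vals P i @ (if fst r = i then [snd r] else []) @ group_vals Q i"
  by (simp add: group_vals_def)

lemma neighboringE:
  assumes "neighboring D D'"
  obtains P r r' Q where "D = P @ r # Q" and "D' = P @ r' # Q"
proof -
  have len: "length D = length D'"
    using assms by (simp add: neighboring_def)
  from assms obtain j where J: "{j. j < length D \<and> D ! j \<noteq> D' ! j} = {j}"
    unfolding neighboring_def by (auto simp: card_Suc_eq)
  then have j: "j < length D" and eq: "\<And>p. p < length D \<Longrightarrow> p \<noteq> j \<Longrightarrow> D ! p = D' ! p"
    by blast+
  have "take j D = take j D'" and "drop (Suc j) D = drop (Suc j) D'"
    by (rule nth_equalityI; use len j eq in auto)+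
  then have "D' = take j D @ D' ! j # drop (Suc j) D"
    using j len by (simp add: id_take_nth_drop)
  moreover have "D = take j D @ D ! j # drop (Suc j) D"
    using j by (simp add: id_take_nth_drop)
  ultimately show ?thesis by (metis that)
qed

lemma sum_of_bool_eq_le_one: "(\<Sum>i \<in> I. of_bool (a = i) :: real) \<le> 1" if "finite I"
  using that unfolding of_bool_def by (simp add: sum.delta)

theorem mainTheorem1:
  fixes k n :: nat and D D' :: database
  assumes "k \<ge> 1" and "n \<ge> 1"
    and "valid_db k n D" and "valid_db k n D'"
    and "neighboring D D'"
  shows "\<bar>SSE k D - SSE k D'\<bar> \<le> 7"
proof -
  obtain P r r' Q where D: "D = P @ r # Q" and D': "D' = P @ r' # Q"
    using assms(5) by (rule neighboringE)
  have in_unit_interval: "set (group_vals P i @ group_vals Q i) \<subseteq> {0..1}" "snd r \<in> {0..1}" "snd r' \<in> {0..1}"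
    for i using assms(3,4) unfolding D D' valid_db_def group_vals_def by fastforce+
  let ?d = "\<lambda>i. sq_dev (group_vals D i) - sq_dev (group_vals D' i)"
  have "\<bar>SSE k D - SSE k D'\<bar> = \<bar>\<Sum>i = 1..k. ?d i\<bar>"
    by (simp add: SSE_eq_sum_sq_dev sum_subtractf)
  also have "\<dots> \<le> (\<Sum>i = 1..k. \<bar>?d i\<bar>)"
    by (rule sum_abs)
  also have "\<dots> \<le> (\<Sum>i = 1..k. of_bool (fst r = i) + of_bool (fst r' = i))"
    unfolding D D' group_vals_append_Cons
    by (intro sum_mono sq_dev_replace_optional_unit_interval in_unit_interval)
  also have "\<dots> \<le> 2"
    using sum_of_bool_eq_le_one[of "{1..k}" "fst r"] sum_of_bool_eq_le_one[of "{1..k}" "fst r'"]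
    by (simp add: sum.distrib)
  finally show ?thesis by simp
qed

end
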